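(* Let $j,s,d,t$ be positive integers with $s>dt$, $q$ a prime power, $\mathcal{C}\subseteq\mathbb{F}_q^{js}$ a linear code of dimension $j(s-dt)$, and $\mathcal{L}:[js]\to[s]$ a labeling with $\Delta_{\mathcal{L}}(\mathcal{C})\ge dt+1$. Let $G\in\mathbb{F}_q^{j(s-dt)\times js}$ be any generator matrix of $\mathcal{C}$, and for $\Lambda\subseteq[s]$ let $G(\Lambda)$ be the submatrix of $G$ consisting of the columns $i\in[js]$ with $\mathcal{L}(i)\in\Lambda$. Then for every $\Lambda\subseteq[s]$ with $|\Lambda|=s-dt$, $G(\Lambda)$ is a square $j(s-dt)\times j(s-dt)$ matrix and $\det G(\Lambda)\neq0$.
   Context: A labeling is a surjection $\mathcal{L}:[n]\to[s]$. Labelweight: for $\mathbf{c}\in\mathbb{F}^n$, $\Delta_{\mathcal{L}}(\mathbf{c})=|\{\mathcal{L}(i): c_i\neq0\}|$; for a code $\mathcal{C}$, $\Delta_{\mathcal{L}}(\mathcal{C})=\min_{\mathbf{0}\ne\mathbf{c}\in\mathcal{C}}\Delta_{\mathcal{L}}(\mathbf{c})$. A generator matrix of $\mathcal{C}$ is a matrix whose row span is $\mathcal{C}$ and whose number of rows equals $\dim\mathcal{C}$. *)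

theory Defs
  imports "Jordan_Normal_Form.Determinant" "Jordan_Normal_Form.DL_Submatrix"
begin

text \<open>Vectors of length n over a field are elements of carrier_vec n; coordinates are
indexed by 0..n-1 and labels by 0..s-1 (0-based versions of [n] and [s]).\<close>

definition is_labeling :: "nat \<Rightarrow> nat \<Rightarrow> (nat \<Rightarrow> nat) \<Rightarrow> bool" where
  "is_labeling n s L \<longleftrightarrow> L ` {..<n} = {..<s}"

definition is_linear_code :: "nat \<Rightarrow> 'a :: field vec set \<Rightarrow> bool" where
  "is_linear_code n C \<longleftrightarrow> C \<subseteq> carrier_vec n \<and> 0\<^sub>v n \<in> C \<and>
     (\<forall>u\<in>C. \<forall>v\<in>C. u + v \<in> C) \<and> (\<forall>a. \<forall>u\<in>C. a \<cdot>\<^sub>v u \<in> C)"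

definition row_span :: "'a :: field mat \<Rightarrow> 'a vec set" where
  "row_span G = {transpose_mat G *\<^sub>v x | x. x \<in> carrier_vec (dim_row G)}"

definition code_dim :: "nat \<Rightarrow> 'a :: field vec set \<Rightarrow> nat" where
  "code_dim n C = (LEAST k. \<exists>G \<in> carrier_mat k n. row_span G = C)"

definition is_generator_matrix :: "nat \<Rightarrow> 'a :: field vec set \<Rightarrow> 'a mat \<Rightarrow> bool" where
  "is_generator_matrix n C G \<longleftrightarrow> G \<in> carrier_mat (code_dim n C) n \<and> row_span G = C"

definition labelweight :: "nat \<Rightarrow> (nat \<Rightarrow> nat) \<Rightarrow> 'a :: zero vec \<Rightarrow> nat" where
  "labelweight n L c = card {L i | i. i < n \<and> c $ i \<noteq> 0}"

definition code_labelweight :: "nat \<Rightarrow> (nat \<Rightarrow> nat) \<Rightarrow> 'a :: zero vec set \<Rightarrow> nat" where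
  "code_labelweight n L C = Min {labelweight n L c | c. c \<in> C \<and> c \<noteq> 0\<^sub>v n}"

text \<open>G(Lambda): columns i with L i in Lambda, in increasing order.\<close>
definition label_submatrix :: "'a mat \<Rightarrow> (nat \<Rightarrow> nat) \<Rightarrow> nat set \<Rightarrow> 'a mat" where
  "label_submatrix G L \<Lambda> = submatrix G {..<dim_row G} {i. i < dim_col G \<and> L i \<in> \<Lambda>}"

end

theory Submission
  imports Defs
begin

(*
  Let k = j(s - dt). If the codeword x G vanishes on all columns whose label lies in a set
  \<Lambda> of s - dt labels, its support uses at most dt labels, so x G = 0 by the label-weight
  bound, and x = 0 because a generator matrix of minimal size has independent rows. Hence the
  k rows of G(\<Lambda>) are independent, which forces G(\<Lambda>) to have at least k columns. The label
  classes have sizes summing to js, so on average an (s - dt)-set of labels carries exactly k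
  columns; as none carries fewer, every G(\<Lambda>) is a k \<times> k matrix with trivial left kernel.
*)

lemma transpose_mult_vec_index:
  assumes "G \<in> carrier_mat k n" "x \<in> carrier_vec k" "c < n"
  shows "(transpose_mat G *\<^sub>v x) $ c = (\<Sum>r<k. G $$ (r, c) * x $ r)"
  using assms by (auto simp: scalar_prod_def atLeast0LessThan intro!: sum.cong)

definition skip :: "nat \<Rightarrow> nat \<Rightarrow> nat" where
  "skip i r = (if r < i then r else Suc r)"

lemma sum_lessThan_skip:
  fixes f :: "nat \<Rightarrow> 'a::comm_monoid_add"
  assumes "i < k"
  shows "(\<Sum>r<k. f r) = f i + (\<Sum>r<k - 1. f (skip i r))"
proof -
  have "bij_betw (skip i) {..<k - 1} ({..<k} - {i})"
  proof (rule bij_betw_imageI)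
    show "inj_on (skip i) {..<k - 1}" by (auto simp: skip_def inj_on_def)
    show "skip i ` {..<k - 1} = {..<k} - {i}"
    proof (intro subset_antisym subsetI)
      fix r assume "r \<in> {..<k} - {i}"
      with assms show "r \<in> skip i ` {..<k - 1}"
        by (cases "r < i") (auto simp: skip_def intro: image_eqI[of _ _ r] image_eqI[of _ _ "r - 1"])
    qed (use assms in \<open>auto simp: skip_def\<close>)
  qed
  then have "(\<Sum>r\<in>{..<k} - {i}. f r) = (\<Sum>r<k - 1. f (skip i r))"
    by (simp add: sum.reindex_bij_betw)
  with assms show ?thesis by (simp add: sum.remove)
qed

lemma transpose_mult_vec_drop_row:
  assumes G: "G \<in> carrier_mat k n" and w: "w \<in> carrier_vec k" and i: "i < k" "w $ i = 0"
  shows "transpose_mat G *\<^sub>v w =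
    transpose_mat (mat (k - 1) n (\<lambda>(r, c). G $$ (skip i r, c))) *\<^sub>v vec (k - 1) (\<lambda>r. w $ skip i r)"
    (is "_ = transpose_mat ?G' *\<^sub>v ?w'")
proof (rule eq_vecI)
  fix c assume "c < dim_vec (transpose_mat ?G' *\<^sub>v ?w')"
  then have c: "c < n" by simp
  have skip_lt: "skip i r < k" if "r < k - 1" for r using that by (auto simp: skip_def)
  have "(transpose_mat G *\<^sub>v w) $ c = (\<Sum>r<k - 1. G $$ (skip i r, c) * w $ skip i r)"
    using transpose_mult_vec_index[OF G w c] sum_lessThan_skip[OF i(1), of "\<lambda>r. G $$ (r, c) * w $ r"] i(2)
    by simp
  also have "\<dots> = (transpose_mat ?G' *\<^sub>v ?w') $ c"
    by (subst transpose_mult_vec_index[of _ "k - 1" n]) (use c skip_lt in auto)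
  finally show "(transpose_mat G *\<^sub>v w) $ c = (transpose_mat ?G' *\<^sub>v ?w') $ c" .
qed (use G in simp)

lemma row_span_drop_dependent_row:
  fixes G :: "'a::field mat"
  assumes G: "G \<in> carrier_mat k n" and x: "x \<in> carrier_vec k" "transpose_mat G *\<^sub>v x = 0\<^sub>v n"
    and i: "i < k" "x $ i \<noteq> 0"
  shows "\<exists>H \<in> carrier_mat (k - 1) n. row_span H = row_span G"
proof (intro bexI)
  define H where "H = mat (k - 1) n (\<lambda>(r, c). G $$ (skip i r, c))"
  show H: "H \<in> carrier_mat (k - 1) n" by (simp add: H_def)
  show "row_span H = row_span G"
  proof (rule Set.set_eqI)
    fix u
    have "u \<in> row_span G" if "u \<in> row_span H"
    proof -
      from that obtain y where y: "y \<in> carrier_vec (k - 1)" "u = transpose_mat H *\<^sub>v y"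
        using H by (auto simp: row_span_def)
      define w where "w = vec k (\<lambda>r. if r = i then 0 else y $ (if r < i then r else r - 1))"
      have w: "w \<in> carrier_vec k" "w $ i = 0" using i(1) by (auto simp: w_def)
      have "vec (k - 1) (\<lambda>r. w $ skip i r) = y"
        using y(1) by (intro eq_vecI) (auto simp: w_def skip_def)
      then have "u = transpose_mat G *\<^sub>v w"
        using transpose_mult_vec_drop_row[OF G w(1) i(1) w(2)] y(2) by (simp add: H_def)
      then show ?thesis using G w(1) by (auto simp: row_span_def)
    qed
    moreover have "u \<in> row_span H" if "u \<in> row_span G"
    proof -
      from that obtain w where w: "w \<in> carrier_vec k" "u = transpose_mat G *\<^sub>v w"
        using G by (auto simp: row_span_def)
      \<comment> \<open>subtract the multiple of the dependency x that kills coordinate i\<close>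
      define w' where "w' = w - (w $ i / x $ i) \<cdot>\<^sub>v x"
      have w': "w' \<in> carrier_vec k" "w' $ i = 0" using w(1) x(1) i by (auto simp: w'_def)
      have "(w $ i / x $ i) \<cdot>\<^sub>v 0\<^sub>v n = (0\<^sub>v n :: 'a vec)" by (intro eq_vecI) auto
      then have "transpose_mat G *\<^sub>v w' = u"
        using G w x by (simp add: w'_def mult_minus_distrib_mat_vec mult_mat_vec)
      then have "u = transpose_mat H *\<^sub>v vec (k - 1) (\<lambda>r. w' $ skip i r)"
        using transpose_mult_vec_drop_row[OF G w'(1) i(1) w'(2)] by (simp add: H_def)
      then show ?thesis using H by (auto simp: row_span_def)
    qed
    ultimately show "u \<in> row_span H \<longleftrightarrow> u \<in> row_span G" by blast
  qed
qed

lemma generator_matrix_rows_independent: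
  fixes G :: "'a::field mat"
  assumes G: "G \<in> carrier_mat k n" and "code_dim n (row_span G) = k"
    and x: "x \<in> carrier_vec k" "transpose_mat G *\<^sub>v x = 0\<^sub>v n"
  shows "x = 0\<^sub>v k"
proof (rule ccontr)
  assume "x \<noteq> 0\<^sub>v k"
  then obtain i where i: "i < k" "x $ i \<noteq> 0" using x(1) by (metis eq_vecI carrier_vecD index_zero_vec)
  have "code_dim n (row_span G) \<le> k - 1"
    unfolding code_dim_def by (rule Least_le[of "\<lambda>k'. \<exists>H \<in> carrier_mat k' n. row_span H = row_span G",
        OF row_span_drop_dependent_row[OF G x i]])
  with assms(2) i(1) show False by simp
qed

lemma wide_mat_kernel_nonzero:
  fixes A :: "'a::field mat"
  assumes A: "A \<in> carrier_mat m k" and "m < k"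
  shows "\<exists>v \<in> carrier_vec k. v \<noteq> 0\<^sub>v k \<and> A *\<^sub>v v = 0\<^sub>v m"
proof -
  \<comment> \<open>pad A with zero rows to a square matrix whose last row vanishes\<close>
  define B where "B = mat\<^sub>r k k (\<lambda>r. if r = k - 1 then 0\<^sub>v k else if r < m then row A r else 0\<^sub>v k)"
  have B: "B \<in> carrier_mat k k" by (simp add: B_def)
  have "det B = 0" unfolding B_def by (rule det_row_0) (use A \<open>m < k\<close> in auto)
  then obtain v where v: "v \<in> carrier_vec k" "v \<noteq> 0\<^sub>v k" "B *\<^sub>v v = 0\<^sub>v k"
    using det_0_iff_vec_prod_zero_field[OF B] by blast
  have "A *\<^sub>v v = 0\<^sub>v m"
  proof (rule eq_vecI)
    fix r assume "r < dim_vec (0\<^sub>v m :: 'a vec)"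
    then have r: "r < m" "r < k" "r \<noteq> k - 1" using \<open>m < k\<close> by auto
    have "(A *\<^sub>v v) $ r = (B *\<^sub>v v) $ r" using A r by (simp add: B_def)
    with v(3) r show "(A *\<^sub>v v) $ r = 0\<^sub>v m $ r" by simp
  qed (use A in simp)
  with v show ?thesis by blast
qed

lemma submatrix_cols_carrier:
  assumes "G \<in> carrier_mat k n" and "J \<subseteq> {..<n}"
  shows "submatrix G {..<k} J \<in> carrier_mat k (card J)"
proof -
  have rows: "{r. r < dim_row G \<and> r \<in> {..<k}} = {..<k}" and cols: "{c. c < dim_col G \<and> c \<in> J} = J"
    using assms by auto
  show ?thesis using dim_submatrix[of G "{..<k}" J] unfolding rows cols by auto
qed

lemma transpose_submatrix_cols_mult_vec_index:
  assumes G: "G \<in> carrier_mat k n" and J: "J \<subseteq> {..<n}"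
    and v: "v \<in> carrier_vec k" and c: "c < card J"
  shows "(transpose_mat (submatrix G {..<k} J) *\<^sub>v v) $ c = (transpose_mat G *\<^sub>v v) $ pick J c"
proof -
  have rows: "{r. r < dim_row G \<and> r \<in> {..<k}} = {..<k}" and cols: "{j. j < dim_col G \<and> j \<in> J} = J"
    using G J by auto
  have S: "submatrix G {..<k} J \<in> carrier_mat k (card J)"
    by (rule submatrix_cols_carrier[OF G J])
  have pick_rows: "pick {..<k} r = r" if "r < k" for r
  proof -
    have "{a \<in> {..<k}. a < r} = {..<r}" using that by auto
    then show ?thesis using pick_card_in_set[of r "{..<k}"] that by simp
  qed
  have "pick J c < n" using pick_in_set[of c J] c J by auto
  then have "(transpose_mat G *\<^sub>v v) $ pick J c = (\<Sum>r<k. G $$ (r, pick J c) * v $ r)"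
    by (rule transpose_mult_vec_index[OF G v])
  also have "\<dots> = (\<Sum>r<k. submatrix G {..<k} J $$ (r, c) * v $ r)"
  proof (rule sum.cong)
    fix r assume "r \<in> {..<k}"
    then have "submatrix G {..<k} J $$ (r, c) = G $$ (r, pick J c)"
      using submatrix_index[of r G "{..<k}" c J] c rows cols pick_rows by auto
    then show "G $$ (r, pick J c) * v $ r = submatrix G {..<k} J $$ (r, c) * v $ r" by simp
  qed simp
  also have "\<dots> = (transpose_mat (submatrix G {..<k} J) *\<^sub>v v) $ c"
    by (rule transpose_mult_vec_index[OF S v c, symmetric])
  finally show ?thesis ..
qed

lemma transpose_submatrix_cols_kernel_iff:
  assumes G: "G \<in> carrier_mat k n" and J: "J \<subseteq> {..<n}" and v: "v \<in> carrier_vec k"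
  shows "transpose_mat (submatrix G {..<k} J) *\<^sub>v v = 0\<^sub>v (card J) \<longleftrightarrow>
    (\<forall>i \<in> J. (transpose_mat G *\<^sub>v v) $ i = 0)"
proof -
  have "finite J" using J finite_subset by blast
  have "{j. j < dim_col G \<and> j \<in> J} = J" using G J by auto
  then have dim: "dim_col (submatrix G {..<k} J) = card J" by (simp add: dim_submatrix)
  have "(\<forall>c < card J. (transpose_mat G *\<^sub>v v) $ pick J c = 0) \<longleftrightarrow>
        (\<forall>i \<in> J. (transpose_mat G *\<^sub>v v) $ i = 0)"
  proof
    assume vanish: "\<forall>c < card J. (transpose_mat G *\<^sub>v v) $ pick J c = 0"
    show "\<forall>i \<in> J. (transpose_mat G *\<^sub>v v) $ i = 0"
    proof
      fix i assume i: "i \<in> J"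
      have "{a \<in> J. a < i} \<subset> J" using i by auto
      then have "card {a \<in> J. a < i} < card J" by (rule psubset_card_mono[OF \<open>finite J\<close>])
      with vanish show "(transpose_mat G *\<^sub>v v) $ i = 0" using pick_card_in_set[OF i] by metis
    qed
  qed (simp add: pick_in_set)
  then show ?thesis
    using transpose_submatrix_cols_mult_vec_index[OF G J v] dim by (auto simp: vec_eq_iff)
qed

lemma card_subsets_containing_eq:
  assumes "x \<in> S" "y \<in> S"
  shows "card {E. E \<subseteq> S \<and> card E = p \<and> x \<in> E} = card {E. E \<subseteq> S \<and> card E = p \<and> y \<in> E}"
proof -
  let ?\<tau> = "transpose x y"
  have inv: "?\<tau> ` ?\<tau> ` E = E" for E by (simp add: image_comp)
  have into_S: "?\<tau> z \<in> S" if "z \<in> S" for z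
    using assms that by (simp add: transpose_def)
  have "bij_betw (image ?\<tau>) {E. E \<subseteq> S \<and> card E = p \<and> x \<in> E} {E. E \<subseteq> S \<and> card E = p \<and> y \<in> E}"
    by (rule bij_betw_byWitness[where f' = "image ?\<tau>"])
      (auto simp: inv into_S card_image in_transpose_image_iff)
  then show ?thesis by (rule bij_betw_same_card)
qed

lemma sum_subsets_of_card:
  fixes g :: "'b \<Rightarrow> 'c::comm_semiring_1"
  assumes S: "finite S" and x: "x \<in> S"
  shows "(\<Sum>E \<in> {E. E \<subseteq> S \<and> card E = p}. sum g E)
           = of_nat (card {E. E \<subseteq> S \<and> card E = p \<and> x \<in> E}) * sum g S"
proof -
  define DD where "DD = {E. E \<subseteq> S \<and> card E = p}"
  have DD: "finite DD" unfolding DD_def using S by (auto intro: finite_subset[of _ "Pow S"])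
  have "(\<Sum>E \<in> DD. sum g E) = (\<Sum>E \<in> DD. \<Sum>l \<in> {l \<in> S. l \<in> E}. g l)"
    by (intro sum.cong refl) (auto simp: DD_def intro!: sum.cong)
  also have "\<dots> = (\<Sum>l \<in> S. \<Sum>E \<in> {E \<in> DD. l \<in> E}. g l)"
    by (rule sum.swap_restrict[OF DD S])
  also have "\<dots> = (\<Sum>l \<in> S. of_nat (card {E \<in> DD. x \<in> E}) * g l)"
    using card_subsets_containing_eq[OF _ x] by (intro sum.cong refl) (simp add: DD_def)
  finally show ?thesis by (simp add: DD_def sum_distrib_left)
qed

lemma subset_sum_eq_average:
  fixes f :: "'b \<Rightarrow> nat"
  assumes S: "finite S" and ge: "\<And>D. D \<subseteq> S \<Longrightarrow> card D = p \<Longrightarrow> a * p \<le> sum f D"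
    and total: "sum f S = a * card S" and D: "D \<subseteq> S" "card D = p"
  shows "sum f D = a * p"
proof (rule ccontr)
  assume "sum f D \<noteq> a * p"
  with ge[OF D] have gt: "a * p < sum f D" by simp
  define DD where "DD = {E. E \<subseteq> S \<and> card E = p}"
  have DD: "finite DD" unfolding DD_def using S by (auto intro: finite_subset[of _ "Pow S"])
  have "D \<noteq> {}" using gt by auto
  with D obtain x where x: "x \<in> S" by blast
  \<comment> \<open>double counting: both f and the constant a sum to the same total over all p-subsets\<close>
  have "(\<Sum>E \<in> DD. a * p) < (\<Sum>E \<in> DD. sum f E)"
    using D ge gt by (intro sum_strict_mono_ex1[OF DD]) (auto simp: DD_def)
  also have "\<dots> = (\<Sum>E \<in> DD. sum (\<lambda>_. a) E)"
    unfolding DD_def sum_subsets_of_card[OF S x] using total by (simp add: mult.commute)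
  also have "\<dots> = (\<Sum>E \<in> DD. a * p)"
    by (intro sum.cong refl) (simp add: DD_def)
  finally show False by simp
qed

lemma labelweight_le_length:
  "labelweight n L c \<le> n"
proof -
  have "{L i | i. i < n \<and> c $ i \<noteq> 0} = L ` {i. i < n \<and> c $ i \<noteq> 0}" by blast
  then have "labelweight n L c \<le> card {i. i < n \<and> c $ i \<noteq> 0}"
    unfolding labelweight_def by (simp add: card_image_le)
  also have "\<dots> \<le> n" using card_mono[of "{..<n}" "{i. i < n \<and> c $ i \<noteq> 0}"] by auto
  finally show ?thesis .
qed

lemma code_labelweight_le:
  assumes "c \<in> C" "c \<noteq> 0\<^sub>v n"
  shows "code_labelweight n L C \<le> labelweight n L c"
proof -
  have "finite {labelweight n L c' | c'. c' \<in> C \<and> c' \<noteq> 0\<^sub>v n}"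
    by (rule finite_subset[of _ "{..n}"]) (auto simp: labelweight_le_length)
  then show ?thesis unfolding code_labelweight_def by (rule Min_le) (use assms in auto)
qed

lemma labelweight_le_card_labels_outside:
  assumes "L ` {..<n} \<subseteq> {..<s}" and "\<forall>i < n. L i \<in> X \<longrightarrow> c $ i = 0"
  shows "labelweight n L c \<le> card ({..<s} - X)"
  unfolding labelweight_def by (rule card_mono) (use assms in auto)

lemma codeword_vanishing_on_label_columns:
  fixes G :: "'a::field mat"
  assumes G: "G \<in> carrier_mat k n" "code_dim n (row_span G) = k"
    and L: "L ` {..<n} \<subseteq> {..<s}"
    and weight: "card ({..<s} - X) < code_labelweight n L (row_span G)"
    and x: "x \<in> carrier_vec k" "\<forall>i < n. L i \<in> X \<longrightarrow> (transpose_mat G *\<^sub>v x) $ i = 0"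
  shows "x = 0\<^sub>v k"
proof -
  let ?c = "transpose_mat G *\<^sub>v x"
  have "?c = 0\<^sub>v n"
  proof (rule ccontr)
    assume "?c \<noteq> 0\<^sub>v n"
    moreover have "?c \<in> row_span G" using G(1) x(1) by (auto simp: row_span_def)
    ultimately have "code_labelweight n L (row_span G) \<le> labelweight n L ?c"
      by (rule code_labelweight_le[rotated])
    with labelweight_le_card_labels_outside[OF L x(2)] weight show False by simp
  qed
  then show ?thesis using generator_matrix_rows_independent[OF G x(1)] by simp
qed

lemma card_label_columns_ge:
  fixes G :: "'a::field mat"
  assumes G: "G \<in> carrier_mat k n" "code_dim n (row_span G) = k"
    and L: "L ` {..<n} \<subseteq> {..<s}"
    and weight: "card ({..<s} - X) < code_labelweight n L (row_span G)"
  shows "k \<le> card {i. i < n \<and> L i \<in> X}"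
proof (rule ccontr)
  define J where "J = {i. i < n \<and> L i \<in> X}"
  assume "\<not> k \<le> card {i. i < n \<and> L i \<in> X}"
  then have "card J < k" by (simp add: J_def)
  moreover have "transpose_mat (submatrix G {..<k} J) \<in> carrier_mat (card J) k"
    using submatrix_cols_carrier[OF G(1), of J] by (auto simp: J_def)
  ultimately obtain v where v: "v \<in> carrier_vec k" "v \<noteq> 0\<^sub>v k"
    "transpose_mat (submatrix G {..<k} J) *\<^sub>v v = 0\<^sub>v (card J)"
    using wide_mat_kernel_nonzero by blast
  have "\<forall>i < n. L i \<in> X \<longrightarrow> (transpose_mat G *\<^sub>v v) $ i = 0"
    using v(3) transpose_submatrix_cols_kernel_iff[OF G(1) _ v(1), of J] by (auto simp: J_def)
  with codeword_vanishing_on_label_columns[OF G L weight v(1)] v(2) show False by simp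
qed

lemma label_submatrix_det_nonzero:
  fixes G :: "'a::field mat"
  assumes G: "G \<in> carrier_mat k n" "code_dim n (row_span G) = k"
    and L: "L ` {..<n} \<subseteq> {..<s}"
    and weight: "card ({..<s} - X) < code_labelweight n L (row_span G)"
    and card: "card {i. i < n \<and> L i \<in> X} = k"
  shows "label_submatrix G L X \<in> carrier_mat k k" "det (label_submatrix G L X) \<noteq> 0"
proof -
  define J where "J = {i. i < n \<and> L i \<in> X}"
  have J: "J \<subseteq> {..<n}" by (auto simp: J_def)
  have A: "label_submatrix G L X = submatrix G {..<k} J"
    using G(1) by (simp add: label_submatrix_def J_def)
  show carrier: "label_submatrix G L X \<in> carrier_mat k k"
    using submatrix_cols_carrier[OF G(1) J] card by (simp add: A J_def)
  have "v = 0\<^sub>v k" if v: "v \<in> carrier_vec k" "transpose_mat (label_submatrix G L X) *\<^sub>v v = 0\<^sub>v k" for v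
  proof -
    have "\<forall>i \<in> J. (transpose_mat G *\<^sub>v v) $ i = 0"
      using v transpose_submatrix_cols_kernel_iff[OF G(1) J v(1)] card by (simp add: A J_def)
    then show ?thesis
      using codeword_vanishing_on_label_columns[OF G L weight v(1)] by (simp add: J_def)
  qed
  then have "det (transpose_mat (label_submatrix G L X)) \<noteq> 0"
    using det_0_iff_vec_prod_zero_field[of "transpose_mat (label_submatrix G L X)" k] carrier by auto
  then show "det (label_submatrix G L X) \<noteq> 0" using det_transpose[OF carrier] by simp
qed

lemma card_label_columns_eq_sum:
  fixes n :: nat and L :: "nat \<Rightarrow> 'b"
  assumes "finite X"
  shows "card {i. i < n \<and> L i \<in> X} = (\<Sum>l \<in> X. card {i. i < n \<and> L i = l})"
proof -
  have "{i. i < n \<and> L i \<in> X} = (\<Union>l \<in> X. {i. i < n \<and> L i = l})" by auto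
  also have "card \<dots> = (\<Sum>l \<in> X. card {i. i < n \<and> L i = l})"
    using assms by (intro card_UN_disjoint) auto
  finally show ?thesis .
qed

theorem mainTheorem5:
  fixes j s d t :: nat and C :: "'a :: {finite, field} vec set"
    and L :: "nat \<Rightarrow> nat" and G :: "'a mat"
  assumes "j > 0" "s > 0" "d > 0" "t > 0" "s > d * t"
    and "is_linear_code (j * s) C"
    and "code_dim (j * s) C = j * (s - d * t)"
    and "is_labeling (j * s) s L"
    and "code_labelweight (j * s) L C \<ge> d * t + 1"
    and "is_generator_matrix (j * s) C G"
  shows "\<forall>\<Lambda>. \<Lambda> \<subseteq> {..<s} \<and> card \<Lambda> = s - d * t \<longrightarrow>
           label_submatrix G L \<Lambda> \<in> carrier_mat (j * (s - d * t)) (j * (s - d * t)) \<and>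
           det (label_submatrix G L \<Lambda>) \<noteq> 0"
proof (intro allI impI)
  define n k where "n = j * s" and "k = j * (s - d * t)"
  have G: "G \<in> carrier_mat k n" "code_dim n (row_span G) = k"
    using assms(7,10) by (auto simp: is_generator_matrix_def n_def k_def)
  have L: "L ` {..<n} = {..<s}" using assms(8) by (simp add: is_labeling_def n_def)
  have weight: "card ({..<s} - \<Lambda>) < code_labelweight n L (row_span G)"
    if "\<Lambda> \<subseteq> {..<s}" "card \<Lambda> = s - d * t" for \<Lambda>
    using that assms(5,9,10) by (simp add: card_Diff_subset finite_subset is_generator_matrix_def n_def)
  define f where "f l = card {i. i < n \<and> L i = l}" for l
  have "sum f {..<s} = j * card {..<s}"
  proof -
    have "{i. i < n \<and> L i \<in> {..<s}} = {..<n}" using L by auto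
    then show ?thesis using card_label_columns_eq_sum[of "{..<s}" n L] by (simp add: f_def n_def)
  qed
  moreover have "k \<le> sum f \<Lambda>" if "\<Lambda> \<subseteq> {..<s}" "card \<Lambda> = s - d * t" for \<Lambda>
    using card_label_columns_ge[OF G equalityD1[OF L] weight[OF that]]
      card_label_columns_eq_sum[OF finite_subset[OF that(1) finite_lessThan]] by (simp add: f_def)
  ultimately have sum_f: "sum f \<Lambda> = k" if "\<Lambda> \<subseteq> {..<s}" "card \<Lambda> = s - d * t" for \<Lambda>
    using subset_sum_eq_average[of "{..<s}" "s - d * t" j f \<Lambda>] that by (simp add: k_def)
  fix \<Lambda> assume \<Lambda>: "\<Lambda> \<subseteq> {..<s} \<and> card \<Lambda> = s - d * t"
  then have "finite \<Lambda>" using finite_subset by blast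
  with \<Lambda> have "card {i. i < n \<and> L i \<in> \<Lambda>} = k"
    using sum_f[of \<Lambda>] card_label_columns_eq_sum[of \<Lambda> n L] by (simp add: f_def)
  from label_submatrix_det_nonzero[OF G equalityD1[OF L] weight this] \<Lambda>
  show "label_submatrix G L \<Lambda> \<in> carrier_mat k k \<and> det (label_submatrix G L \<Lambda>) \<noteq> 0" by auto
qed

end
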